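(* There exists a deterministic Guesser (using no randomness at all) with $\log^2 n + \log n$ bits of memory whose expected number of correct guesses, when playing the card guessing game against the random-shuffle Dealer, is at least $\frac12 \log n$.
   Context: Card guessing game: a deck consists of $n$ distinct cards labeled $1,\dots,n$ and the game lasts $n$ turns. In each turn the Dealer selects a card from the cards still in the deck and places it face down; the Guesser then names a card of $[n]$ (her guess); the card is revealed and discarded from the deck. A guess is correct if it equals the drawn card; the score is the number of correct guesses. A Guesser with $m$ bits of memory keeps a memory state in $\{0,1\}^m$ between turns and consists of a guessing function (mapping the memory state to a guess) and a state-transition function (mapping the memory state and the revealed card to a new memory state). The random-shuffle Dealer arranges the deck according to a uniformly random permutation and draws the cards in that order. Logarithms $\log$ are base 2. *)

theory Defs
  imports Complex_Main "HOL-Combinatorics.Multiset_Permutations"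
begin

definition is_guesser ::
  "nat \<Rightarrow> nat \<Rightarrow> (bool list \<Rightarrow> nat) \<Rightarrow> (bool list \<Rightarrow> nat \<Rightarrow> bool list) \<Rightarrow> bool list \<Rightarrow> bool" where
  "is_guesser n m g d s0 \<longleftrightarrow>
     length s0 = m \<and>
     (\<forall>s. length s = m \<longrightarrow> g s \<in> {1..n}) \<and>
     (\<forall>s c. length s = m \<longrightarrow> c \<in> {1..n} \<longrightarrow> length (d s c) = m)"

fun play :: "(bool list \<Rightarrow> nat) \<Rightarrow> (bool list \<Rightarrow> nat \<Rightarrow> bool list) \<Rightarrow> bool list \<Rightarrow> nat list \<Rightarrow> nat" where
  "play g d s [] = 0"
| "play g d s (c # cs) = (if g s = c then 1 else 0) + play g d (d s c) cs"

definition expected_score ::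
  "nat \<Rightarrow> (bool list \<Rightarrow> nat) \<Rightarrow> (bool list \<Rightarrow> nat \<Rightarrow> bool list) \<Rightarrow> bool list \<Rightarrow> real" where
  "expected_score n g d s0 =
     (\<Sum>p\<in>permutations_of_set {1..n}. real (play g d s0 p)) / real (card (permutations_of_set {1..n}))"

end

theory Submission
  imports Defs "HOL-Library.Discrete_Functions"
begin

text \<open>Let L = floor_log n and split [1, 2^L) into the blocks [2^j, 2^(j+1)). The guesser
  remembers, for each block j, how many of its cards have been drawn and their sum modulo 2^j,
  which takes at most L^2 bits. As soon as the first incomplete block lacks a single card, the
  residue of the sum identifies that card and the guesser names it. Whenever the last card of
  [1, 2^(j+1)) to be drawn lies in block j, all lower blocks are complete by then and this card
  is guessed correctly. For a uniform permutation the last card of [1, 2^(j+1)) is uniform, so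
  this happens with probability 2^j / (2^(j+1) - 1), which is 1 for j = 0 and at least 1/2
  otherwise; the expected score is therefore at least (L + 1) / 2 > (log n) / 2.\<close>

fun automaton_score :: "('q \<Rightarrow> nat) \<Rightarrow> ('q \<Rightarrow> nat \<Rightarrow> 'q) \<Rightarrow> 'q \<Rightarrow> nat list \<Rightarrow> nat" where
  "automaton_score G D q [] = 0"
| "automaton_score G D q (c # cs) = (if G q = c then 1 else 0) + automaton_score G D (D q c) cs"

lemma guesser_of_automaton:
  fixes G :: "'q \<Rightarrow> nat" and D :: "'q \<Rightarrow> nat \<Rightarrow> 'q"
  assumes "finite Q" "card Q \<le> 2^m" "q0 \<in> Q"
    and D: "\<And>q c. q \<in> Q \<Longrightarrow> D q c \<in> Q" and G: "\<And>q. q \<in> Q \<Longrightarrow> G q \<in> {1..n}"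
  obtains g d s0 where "is_guesser n m g d s0" "\<And>cs. play g d s0 cs = automaton_score G D q0 cs"
proof -
  let ?M = "{s :: bool list. length s = m}"
  have "card Q \<le> card ?M" using assms(2) card_lists_length_eq[of "UNIV :: bool set" m] by simp
  moreover have "finite ?M" using finite_lists_length_eq[of "UNIV :: bool set" m] by simp
  ultimately obtain f where f: "f ` Q \<subseteq> ?M" "inj_on f Q"
    using card_le_inj[OF assms(1)] by blast
  define g where "g s = G (if s \<in> f ` Q then inv_into Q f s else q0)" for s
  define d where "d s c = (if s \<in> f ` Q then f (D (inv_into Q f s) c) else s)" for s c
  have g_f: "g (f q) = G q" and d_f: "d (f q) c = f (D q c)" if "q \<in> Q" for q c
    using that f(2) by (simp_all add: g_def d_def)
  have guesser: "is_guesser n m g d (f q0)"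
    unfolding is_guesser_def
  proof (intro conjI allI impI)
    show "length (f q0) = m" using f(1) assms(3) by blast
    show "g s \<in> {1..n}" for s
      unfolding g_def by (rule G) (simp add: assms(3) inv_into_into)
    show "length (d s c) = m" if "length s = m" for s c
    proof (cases "s \<in> f ` Q")
      case True
      then have "D (inv_into Q f s) c \<in> Q" by (intro D inv_into_into)
      then show ?thesis using True f(1) by (auto simp: d_def)
    qed (simp add: d_def that)
  qed
  have "play g d (f q) cs = automaton_score G D q cs" if "q \<in> Q" for q cs
    using that by (induction cs arbitrary: q) (simp_all add: g_f d_f D)
  with guesser assms(3) show ?thesis by (intro that) auto
qed

lemma automaton_score_summary:
  assumes "\<And>S c. c \<notin> S \<Longrightarrow> D (\<sigma> S) c = \<sigma> (insert c S)"
  shows "distinct p \<Longrightarrow> set p \<inter> S = {} \<Longrightarrow> automaton_score G D (\<sigma> S) p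
    = card {c \<in> set p. G (\<sigma> (S \<union> set (takeWhile (\<lambda>x. x \<noteq> c) p))) = c}"
proof (induction p arbitrary: S)
  case (Cons a p)
  then have "a \<notin> S" "a \<notin> set p" by auto
  have seen_a: "S \<union> set (takeWhile (\<lambda>x. x \<noteq> a) (a # p)) = S" by simp
  have seen_p: "S \<union> set (takeWhile (\<lambda>x. x \<noteq> c) (a # p))
      = insert a S \<union> set (takeWhile (\<lambda>x. x \<noteq> c) p)" if "c \<in> set p" for c
    using that \<open>a \<notin> set p\<close> by auto
  have "{c \<in> set (a # p). G (\<sigma> (S \<union> set (takeWhile (\<lambda>x. x \<noteq> c) (a # p)))) = c}
      = (if G (\<sigma> S) = a then {a} else {})
        \<union> {c \<in> set p. G (\<sigma> (insert a S \<union> set (takeWhile (\<lambda>x. x \<noteq> c) p))) = c}"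
    using \<open>a \<notin> set p\<close> seen_a seen_p by (auto simp del: takeWhile.simps Un_insert_left)
  moreover have "automaton_score G D (\<sigma> S) (a # p)
      = card (if G (\<sigma> S) = a then {a} else {})
        + card {c \<in> set p. G (\<sigma> (insert a S \<union> set (takeWhile (\<lambda>x. x \<noteq> c) p))) = c}"
    using Cons assms[OF \<open>a \<notin> S\<close>] by auto
  ultimately show ?case using \<open>a \<notin> set p\<close> by (simp add: card_Un_disjoint)
qed simp

definition last_in :: "'a set \<Rightarrow> 'a list \<Rightarrow> 'a" where
  "last_in U p = last (filter (\<lambda>x. x \<in> U) p)"

lemma filter_mem_permutation_ne_Nil:
  assumes "p \<in> permutations_of_set A" "U \<subseteq> A" "U \<noteq> {}"
  shows "filter (\<lambda>x. x \<in> U) p \<noteq> []"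
  using assms by (auto simp: permutations_of_set_def filter_empty_conv)

lemma last_in_mem:
  assumes "p \<in> permutations_of_set A" "U \<subseteq> A" "U \<noteq> {}"
  shows "last_in U p \<in> U"
  using last_in_set[OF filter_mem_permutation_ne_Nil[OF assms]] by (auto simp: last_in_def)

lemma last_in_map_transpose:
  assumes "u \<in> U" "v \<in> U" "filter (\<lambda>x. x \<in> U) p \<noteq> []"
  shows "last_in U (map (Transposition.transpose u v) p) = Transposition.transpose u v (last_in U p)"
proof -
  have "filter (\<lambda>x. x \<in> U) (map (Transposition.transpose u v) p)
      = map (Transposition.transpose u v) (filter (\<lambda>x. x \<in> U) p)"
    using assms(1,2) by (auto simp: filter_map o_def transpose_def intro!: filter_cong)
  then show ?thesis using assms(3) by (simp add: last_in_def last_map)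
qed

lemma card_last_in_eq_le:
  assumes "finite A" "U \<subseteq> A" "u \<in> U" "v \<in> U"
  shows "card {p \<in> permutations_of_set A. last_in U p = u}
       \<le> card {p \<in> permutations_of_set A. last_in U p = v}"
proof (rule card_inj_on_le)
  let ?\<tau> = "map (Transposition.transpose u v)"
  show "inj_on ?\<tau> {p \<in> permutations_of_set A. last_in U p = u}"
    by (meson inj_mapI inj_on_subset subset_UNIV inj_transpose)
  show "?\<tau> ` {p \<in> permutations_of_set A. last_in U p = u}
      \<subseteq> {p \<in> permutations_of_set A. last_in U p = v}"
  proof (rule image_subsetI)
    fix p assume "p \<in> {p \<in> permutations_of_set A. last_in U p = u}"
    then have p: "p \<in> permutations_of_set A" and last: "last_in U p = u" by simp_all
    have "u \<in> A" "v \<in> A" using assms by auto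
    then have "?\<tau> p \<in> permutations_of_set A"
      using p by (auto simp: permutations_of_set_def distinct_map)
    moreover have "last_in U (?\<tau> p) = v"
      using last_in_map_transpose[OF assms(3,4) filter_mem_permutation_ne_Nil[OF p assms(2)]] last
        assms(3)
      by auto
    ultimately show "?\<tau> p \<in> {p \<in> permutations_of_set A. last_in U p = v}" by simp
  qed
qed simp

lemma card_last_in_mem:
  assumes "finite A" "U \<subseteq> A" "B \<subseteq> U" "U \<noteq> {}"
  shows "card {p \<in> permutations_of_set A. last_in U p \<in> B} * card U
       = card B * card (permutations_of_set A)"
proof -
  obtain u0 where u0: "u0 \<in> U" using assms(4) by blast
  define k where "k = card {p \<in> permutations_of_set A. last_in U p = u0}"
  have card_eq: "card {p \<in> permutations_of_set A. last_in U p = u} = k" if "u \<in> U" for u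
    unfolding k_def
    by (rule antisym) (fact card_last_in_eq_le[OF assms(1,2) that u0]
        card_last_in_eq_le[OF assms(1,2) u0 that])+
  have card_X: "card {p \<in> permutations_of_set A. last_in U p \<in> X} = card X * k" if "X \<subseteq> U" for X
  proof -
    have "finite X" using finite_subset[OF that finite_subset[OF assms(2,1)]] .
    have "{p \<in> permutations_of_set A. last_in U p \<in> X}
        = (\<Union>u\<in>X. {p \<in> permutations_of_set A. last_in U p = u})" by blast
    also have "card \<dots> = (\<Sum>u\<in>X. card {p \<in> permutations_of_set A. last_in U p = u})"
      using \<open>finite X\<close> by (intro card_UN_disjoint) auto
    also have "\<dots> = (\<Sum>u\<in>X. k)" using that card_eq by (intro sum.cong) auto
    finally show ?thesis by simp
  qed
  have "{p \<in> permutations_of_set A. last_in U p \<in> U} = permutations_of_set A"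
    using last_in_mem[OF _ assms(2,4)] by blast
  then have "card (permutations_of_set A) = card U * k" using card_X[OF order_refl] by simp
  then show ?thesis using card_X[OF assms(3)] by simp
qed

definition block :: "nat \<Rightarrow> nat set" where
  "block j = {2^j..<2^Suc j}"

definition blocks_upto :: "nat \<Rightarrow> nat set" where
  "blocks_upto j = {1..<2^Suc j}"

lemma card_block [simp]: "card (block j) = 2^j"
  by (simp add: block_def)

lemma finite_block [simp]: "finite (block j)"
  by (simp add: block_def)

lemma floor_log_of_block: "c \<in> block j \<Longrightarrow> floor_log c = j"
  by (intro floor_log_eqI) (auto simp: block_def)

lemma disjoint_block: "i \<noteq> j \<Longrightarrow> block i \<inter> block j = {}"
  using floor_log_of_block by blast

lemma block_subset_blocks_upto: "i \<le> j \<Longrightarrow> block i \<subseteq> blocks_upto j"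
proof -
  assume "i \<le> j"
  then have "(2::nat)^Suc i \<le> 2^Suc j" by (intro power_increasing) auto
  moreover have "(1::nat) \<le> 2^i" by simp
  ultimately show ?thesis by (auto simp: block_def blocks_upto_def)
qed

lemma card_blocks_upto: "card (blocks_upto j) = 2 * 2^j - 1"
  by (simp add: blocks_upto_def)

lemma blocks_upto_subset_atLeastAtMost: "2^Suc j \<le> n \<Longrightarrow> blocks_upto j \<subseteq> {1..n}"
  by (auto simp: blocks_upto_def)

definition summary :: "nat \<Rightarrow> nat set \<Rightarrow> nat \<Rightarrow> nat \<times> nat" where
  "summary L S = (\<lambda>j\<in>{..<L}. (card (block j \<inter> S), (\<Sum>(block j \<inter> S)) mod 2^j))"

definition summaries :: "nat \<Rightarrow> (nat \<Rightarrow> nat \<times> nat) set" where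
  "summaries L = (\<Pi>\<^sub>E j\<in>{..<L}. {0..2^j} \<times> {..<2^j})"

text \<open>The cap at 2^j is never active on summaries of sets; it only makes
  summaries L closed under the update.\<close>
definition summary_step :: "nat \<Rightarrow> (nat \<Rightarrow> nat \<times> nat) \<Rightarrow> nat \<Rightarrow> nat \<Rightarrow> nat \<times> nat" where
  "summary_step L v c = (\<lambda>j\<in>{..<L}.
     if c \<in> block j then (min (Suc (fst (v j))) (2^j), (snd (v j) + c) mod 2^j) else v j)"

lemma summary_in_summaries: "summary L S \<in> summaries L"
proof -
  have "card (block j \<inter> S) \<le> 2^j" for j
    by (metis card_block card_mono finite_block inf_le1)
  then show ?thesis by (auto simp: summary_def summaries_def)
qed

lemma summary_step_in_summaries: "v \<in> summaries L \<Longrightarrow> summary_step L v c \<in> summaries L"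
  by (auto simp: summary_step_def summaries_def PiE_iff)

lemma summary_insert:
  assumes "c \<notin> S"
  shows "summary L (insert c S) = summary_step L (summary L S) c"
proof
  fix j
  show "summary L (insert c S) j = summary_step L (summary L S) c j"
  proof (cases "j < L \<and> c \<in> block j")
    case True
    then have block_insert: "block j \<inter> insert c S = insert c (block j \<inter> S)" by auto
    have "card (insert c (block j \<inter> S)) \<le> 2^j"
      by (metis block_insert card_block card_mono finite_block inf_le1)
    then show ?thesis
      using True assms
      by (simp add: block_insert summary_def summary_step_def) (metis add.commute mod_add_left_eq)
  next
    case False
    then show ?thesis by (auto simp: summary_def summary_step_def Int_insert_right)
  qed
qed

lemma finite_summaries: "finite (summaries L)"
  unfolding summaries_def by (intro finite_PiE) auto

lemma card_summaries: "card (summaries L) \<le> 2^(L * L)"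
proof -
  have "card (summaries L) = (\<Prod>j<L. (2^j + 1) * 2^j)"
    unfolding summaries_def by (subst card_PiE) (simp_all add: card_cartesian_product)
  also have "\<dots> \<le> (\<Prod>j<L. 2^(2 * j + 1))"
  proof (rule prod_mono)
    fix j
    have "((2::nat)^j + 1) * 2^j \<le> (2 * 2^j) * 2^j" by (intro mult_right_mono) simp_all
    also have "\<dots> = 2^(2 * j + 1)" unfolding mult_2 power_add by simp
    finally show "0 \<le> ((2::nat)^j + 1) * 2^j \<and> ((2::nat)^j + 1) * 2^j \<le> 2^(2 * j + 1)" by simp
  qed
  also have "\<dots> = 2^(\<Sum>j<L. 2 * j + 1)" by (simp add: power_sum)
  also have "(\<Sum>j<L. 2 * j + 1) = L * L" by (induction L) auto
  finally show ?thesis .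
qed

text \<open>If the first incomplete block j lacks exactly one card c, then c is the element of
  block j congruent to the block sum minus the stored partial sum modulo 2^j.\<close>
definition block_guess :: "nat \<Rightarrow> (nat \<Rightarrow> nat \<times> nat) \<Rightarrow> nat" where
  "block_guess L v =
     (if \<exists>j<L. fst (v j) < 2^j then
        let j = LEAST j. j < L \<and> fst (v j) < 2^j in
        if Suc (fst (v j)) = 2^j then 2^j + (\<Sum>(block j) - snd (v j)) mod 2^j else 1
      else 1)"

lemma block_guess_range:
  assumes "2^L \<le> n"
  shows "block_guess L v \<in> {1..n}"
proof -
  have "1 \<le> n" using one_le_power[of "2::nat" L] assms by linarith
  show ?thesis
  proof (cases "\<exists>j<L. fst (v j) < 2^j")
    case True
    define j where "j = (LEAST j. j < L \<and> fst (v j) < 2^j)"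
    have "j < L" unfolding j_def using True by (metis (mono_tags, lifting) LeastI)
    then have "2 * (2::nat)^j \<le> 2^L" using power_increasing[of "Suc j" L "2::nat"] by simp
    moreover have "(\<Sum>(block j) - snd (v j)) mod 2^j < (2::nat)^j" by simp
    ultimately have "2^j + (\<Sum>(block j) - snd (v j)) mod 2^j \<le> n" using assms by linarith
    then show ?thesis using True \<open>1 \<le> n\<close> by (simp add: block_guess_def j_def Let_def)
  next
    case False
    then show ?thesis using \<open>1 \<le> n\<close> unfolding block_guess_def by auto
  qed
qed

lemma add_mod_recovers:
  fixes k c T :: nat
  assumes "k \<le> c" "c < 2 * k" "c \<le> T"
  shows "k + (T - (T - c) mod k) mod k = c"
proof -
  have "T - (T - c) mod k = c + (T - c) div k * k"
    using assms(3) div_mult_mod_eq[of "T - c" k] by linarith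
  then have "(T - (T - c) mod k) mod k = c mod k" by simp
  also have "\<dots> = c - k" using assms(1,2) by (simp add: le_mod_geq)
  finally show ?thesis using assms(1) by simp
qed

lemma block_guess_summary:
  assumes "j < L" "c \<in> block j" "\<And>i. i < j \<Longrightarrow> block i \<subseteq> S" "block j \<inter> S = block j - {c}"
  shows "block_guess L (summary L S) = c"
proof -
  let ?v = "summary L S"
  have complete: "fst (?v i) = 2^i" if "i < j" for i
    using assms(3)[OF that] assms(1) that by (simp add: summary_def Int_absorb2)
  have one_missing: "Suc (fst (?v j)) = 2^j"
    using assms(1,2,4) by (simp add: summary_def)
  have first: "(LEAST i. i < L \<and> fst (?v i) < 2^i) = j"
  proof (rule Least_equality)
    show "j < L \<and> fst (?v j) < 2^j" using assms(1) one_missing by simp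
    show "j \<le> i" if "i < L \<and> fst (?v i) < 2^i" for i
      using complete[of i] that by (metis leI less_irrefl)
  qed
  have residue: "snd (?v j) = (\<Sum>(block j) - c) mod 2^j"
    using assms by (simp add: summary_def sum_diff1_nat)
  have "2^j \<le> c" "c < 2 * 2^j" using assms(2) by (auto simp: block_def)
  moreover have "c \<le> \<Sum>(block j)" using assms(2) by (intro member_le_sum) auto
  ultimately show ?thesis
    using assms(1) one_missing first
    by (auto simp: block_guess_def Let_def residue add_mod_recovers)
qed

lemma before_last_in:
  assumes "distinct p" "U \<subseteq> set p" "U \<noteq> {}"
  shows "U - {last_in U p} \<subseteq> set (takeWhile (\<lambda>x. x \<noteq> last_in U p) p)"
proof -
  obtain c where c: "last_in U p = c" by blast
  have "filter (\<lambda>x. x \<in> U) p \<noteq> []" using assms(2,3) by (auto simp: filter_empty_conv)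
  from last_in_set[OF this] have "c \<in> set p" by (simp add: c[symmetric] last_in_def)
  then obtain xs ys where p: "p = xs @ c # ys" and "c \<notin> set xs"
    by (meson split_list_first)
  have "filter (\<lambda>x. x \<in> U) ys = []"
  proof (rule ccontr)
    assume ne: "filter (\<lambda>x. x \<in> U) ys \<noteq> []"
    then have "last (filter (\<lambda>x. x \<in> U) ys) = c"
      using c unfolding last_in_def p by (simp add: last_append split: if_splits)
    then have "c \<in> set ys" using last_in_set[OF ne] by simp
    then show False using assms(1) p by simp
  qed
  then have "U \<inter> set ys = {}" by (auto simp: filter_empty_conv)
  moreover have "takeWhile (\<lambda>x. x \<noteq> c) p = xs"
    unfolding p using \<open>c \<notin> set xs\<close> by (subst takeWhile_append2) auto
  ultimately show ?thesis using assms(2) unfolding c by (auto simp: p)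
qed

lemma card_last_in_block_le:
  assumes "p \<in> permutations_of_set {1..n}" "2^L \<le> n"
  shows "card {j \<in> {..<L}. last_in (blocks_upto j) p \<in> block j}
       \<le> card {c \<in> set p. block_guess L (summary L (set (takeWhile (\<lambda>x. x \<noteq> c) p))) = c}"
proof (rule card_inj_on_le)
  show "inj_on (\<lambda>j. last_in (blocks_upto j) p) {j \<in> {..<L}. last_in (blocks_upto j) p \<in> block j}"
  proof (rule inj_onI)
    fix i j
    assume "i \<in> {j \<in> {..<L}. last_in (blocks_upto j) p \<in> block j}"
      and "j \<in> {j \<in> {..<L}. last_in (blocks_upto j) p \<in> block j}"
      and "last_in (blocks_upto i) p = last_in (blocks_upto j) p"
    then show "i = j" using floor_log_of_block by (metis (no_types, lifting) mem_Collect_eq)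
  qed
  have p: "set p = {1..n}" "distinct p" using assms(1) by (auto simp: permutations_of_set_def)
  show "(\<lambda>j. last_in (blocks_upto j) p) ` {j \<in> {..<L}. last_in (blocks_upto j) p \<in> block j}
      \<subseteq> {c \<in> set p. block_guess L (summary L (set (takeWhile (\<lambda>x. x \<noteq> c) p))) = c}"
  proof (rule image_subsetI)
    fix j assume "j \<in> {j \<in> {..<L}. last_in (blocks_upto j) p \<in> block j}"
    then have "j < L" and "last_in (blocks_upto j) p \<in> block j" by auto
    obtain c where c: "last_in (blocks_upto j) p = c" by blast
    with \<open>last_in (blocks_upto j) p \<in> block j\<close> have c_block: "c \<in> block j" by simp
    have "2^Suc j \<le> n" using \<open>j < L\<close> assms(2) power_increasing[of "Suc j" L "2::nat"] by simp
    then have sub: "blocks_upto j \<subseteq> set p" unfolding p(1) by (rule blocks_upto_subset_atLeastAtMost)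
    moreover have "blocks_upto j \<noteq> {}" using c_block block_subset_blocks_upto[of j j] by blast
    ultimately have seen: "blocks_upto j - {c} \<subseteq> set (takeWhile (\<lambda>x. x \<noteq> c) p)"
      using before_last_in[OF p(2)] c by blast
    have "block_guess L (summary L (set (takeWhile (\<lambda>x. x \<noteq> c) p))) = c"
    proof (rule block_guess_summary[OF \<open>j < L\<close> c_block])
      fix i assume "i < j"
      then have "block i \<subseteq> blocks_upto j - {c}"
        using block_subset_blocks_upto[of i j] disjoint_block[of i j] c_block by auto
      then show "block i \<subseteq> set (takeWhile (\<lambda>x. x \<noteq> c) p)" using seen by blast
    next
      have "c \<notin> set (takeWhile (\<lambda>x. x \<noteq> c) p)" by (auto dest: set_takeWhileD)
      then show "block j \<inter> set (takeWhile (\<lambda>x. x \<noteq> c) p) = block j - {c}"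
        using seen block_subset_blocks_upto[of j j] by auto
    qed
    moreover have "c \<in> set p" using c_block block_subset_blocks_upto[of j j] sub by auto
    ultimately show "last_in (blocks_upto j) p
        \<in> {c \<in> set p. block_guess L (summary L (set (takeWhile (\<lambda>x. x \<noteq> c) p))) = c}"
      by (simp add: c)
  qed
qed simp

lemma card_last_in_block:
  assumes "2^Suc j \<le> n"
  shows "card {p \<in> permutations_of_set {1..n}. last_in (blocks_upto j) p \<in> block j} * (2 * 2^j - 1)
       = 2^j * card (permutations_of_set {1..n})"
proof -
  have "1 < (2::nat)^Suc j" by (rule one_less_power) simp_all
  then have "blocks_upto j \<noteq> {}" by (simp add: blocks_upto_def)
  then show ?thesis
    using card_last_in_mem[of "{1..n}" "blocks_upto j" "block j"] card_blocks_upto[of j]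
      blocks_upto_subset_atLeastAtMost[OF assms] block_subset_blocks_upto[of j j]
    by simp
qed

lemma sum_card_last_in_block:
  assumes "0 < L" "2^L \<le> n"
  shows "(L + 1) * card (permutations_of_set {1..n})
       \<le> 2 * (\<Sum>p\<in>permutations_of_set {1..n}. card {j \<in> {..<L}. last_in (blocks_upto j) p \<in> block j})"
proof -
  let ?P = "permutations_of_set {1..n}"
  define k where "k j = card {p \<in> ?P. last_in (blocks_upto j) p \<in> block j}" for j
  have double_count: "(\<Sum>p\<in>?P. card {j \<in> {..<L}. last_in (blocks_upto j) p \<in> block j}) = (\<Sum>j<L. k j)"
    by (rule sum_multicount_gen) (auto simp: k_def)
  have "k 0 = card ?P"
    using card_last_in_block[of 0 n] assms power_increasing[of 1 L "2::nat"] by (simp add: k_def)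
  moreover have "card ?P \<le> 2 * k j" if "j < L" for j
  proof -
    have "2^Suc j \<le> n" using that assms(2) power_increasing[of "Suc j" L "2::nat"] by simp
    have "card ?P * (2 * 2^j - 1) \<le> 2 * 2^j * card ?P" by simp
    also have "\<dots> = 2 * k j * (2 * 2^j - 1)"
      using card_last_in_block[OF \<open>2^Suc j \<le> n\<close>] by (simp add: k_def)
    finally have "card ?P * (2 * 2^j - 1) \<le> 2 * k j * (2 * 2^j - 1)" .
    moreover have "0 < 2 * (2::nat)^j - 1" using one_le_power[of "2::nat" j] by linarith
    ultimately show ?thesis by simp
  qed
  moreover obtain l where L: "L = Suc l" using assms(1) gr0_implies_Suc by blast
  ultimately have "(L + 1) * card ?P \<le> 2 * k 0 + (\<Sum>j<l. 2 * k (Suc j))"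
    using sum_mono[of "{..<l}" "\<lambda>_. card ?P" "\<lambda>j. 2 * k (Suc j)"] by simp
  also have "\<dots> = 2 * (\<Sum>j<L. k j)"
    unfolding L sum.lessThan_Suc_shift by (simp add: sum_distrib_left del: sum.lessThan_Suc)
  finally show ?thesis by (simp only: double_count)
qed

lemma half_log_le_expected_score:
  assumes "n \<ge> 1"
    and score: "\<And>p. p \<in> permutations_of_set {1..n} \<Longrightarrow>
      card {j \<in> {..<floor_log n}. last_in (blocks_upto j) p \<in> block j} \<le> play g d s0 p"
  shows "(1/2) * log 2 n \<le> expected_score n g d s0"
proof (cases "floor_log n = 0")
  case True
  then have "n = 1" using assms(1) floor_log_exp2_gt[of n] by simp
  then show ?thesis by (simp add: expected_score_def sum_nonneg)
next
  case False
  let ?P = "permutations_of_set {1..n}"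
  have "(floor_log n + 1) * card ?P
      \<le> 2 * (\<Sum>p\<in>?P. card {j \<in> {..<floor_log n}. last_in (blocks_upto j) p \<in> block j})"
    using sum_card_last_in_block False floor_log_exp2_le assms(1) by simp
  also have "\<dots> \<le> 2 * (\<Sum>p\<in>?P. play g d s0 p)"
    using score by (simp add: sum_mono)
  finally have "real ((floor_log n + 1) * card ?P) \<le> real (2 * (\<Sum>p\<in>?P. play g d s0 p))"
    by (simp only: of_nat_le_iff)
  then have "real (floor_log n + 1) / 2 \<le> expected_score n g d s0"
    unfolding expected_score_def by (simp add: field_simps)
  moreover have "log 2 n < real (floor_log n + 1)"
    using log2_of_power_less[of n "floor_log n + 1"] floor_log_exp2_gt[of n] assms(1) by simp
  ultimately show ?thesis by simp
qed

lemma card_last_in_block_le_automaton_score: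
  assumes "p \<in> permutations_of_set {1..n}" "2^L \<le> n"
  shows "card {j \<in> {..<L}. last_in (blocks_upto j) p \<in> block j}
       \<le> automaton_score (block_guess L) (summary_step L) (summary L {}) p"
proof -
  have "distinct p" using assms(1) by (simp add: permutations_of_set_def)
  then have "automaton_score (block_guess L) (summary_step L) (summary L {}) p
      = card {c \<in> set p. block_guess L (summary L (set (takeWhile (\<lambda>x. x \<noteq> c) p))) = c}"
    using automaton_score_summary[of "summary_step L" "summary L"] summary_insert by simp
  then show ?thesis using card_last_in_block_le[OF assms] by simp
qed

lemma floor_log_squared_le: "n \<ge> 1 \<Longrightarrow> real (floor_log n * floor_log n) \<le> (log 2 n)\<^sup>2 + log 2 n"
proof -
  assume "n \<ge> 1"
  then have "real (floor_log n) \<le> log 2 n" by (intro le_log2_of_power floor_log_exp2_le) simp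
  then have "real (floor_log n) * real (floor_log n) \<le> log 2 n * log 2 n" by (intro mult_mono) auto
  moreover have "0 \<le> log 2 n" using \<open>n \<ge> 1\<close> by simp
  ultimately show ?thesis by (simp add: power2_eq_square)
qed

theorem mainTheorem1:
  fixes n :: nat
  assumes "n \<ge> 1"
  shows "\<exists>m g d s0. real m \<le> (log 2 n)\<^sup>2 + log 2 n \<and> is_guesser n m g d s0 \<and>
           expected_score n g d s0 \<ge> (1/2) * log 2 n"
proof -
  define L where "L = floor_log n"
  have "2^L \<le> n" using assms floor_log_exp2_le by (simp add: L_def)
  obtain g d s0 where guesser: "is_guesser n (L * L) g d s0"
    and play: "\<And>cs. play g d s0 cs = automaton_score (block_guess L) (summary_step L) (summary L {}) cs"
    using guesser_of_automaton[where G = "block_guess L" and D = "summary_step L",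
        OF finite_summaries card_summaries summary_in_summaries[of L "{}"]
        summary_step_in_summaries block_guess_range[OF \<open>2^L \<le> n\<close>]] by blast
  have "(1/2) * log 2 n \<le> expected_score n g d s0"
    using half_log_le_expected_score[OF assms] card_last_in_block_le_automaton_score[OF _ \<open>2^L \<le> n\<close>]
    by (simp add: play L_def)
  then show ?thesis using guesser floor_log_squared_le[OF assms] unfolding L_def by blast
qed

end
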